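(* Let $0<\alpha<1$, $\sigma>0$, $N_1$ a positive integer, $h=\sigma^2\alpha^2$, $T=\sqrt{N_1h}=\sigma\alpha\sqrt{N_1}$, $\kappa=\frac{\alpha}{1-\alpha}$, and $N_t=\mathrm{ceil}\big((\kappa+1)^2T^2/h+1\big)$. For $x\in[0,1]$ and $u>0$ let $$f(u,x)=\frac{\sin(\alpha\pi)}{\alpha\pi}\frac{1}{2\sqrt u}\frac{xe^{\sqrt u-T}}{e^{\frac1\alpha(\sqrt u-T)}+x},\quad I(x)=\int_0^{N_th}f(u,x)\,\mathrm{d}u,\quad S(x)=h\sum_{j=1}^{N_t}f(jh,x).$$ Let $$u^*=\frac{1+(1-2\alpha)\sqrt{4\alpha-4\alpha^2+1}}{2(1-\alpha)^2},\qquad x^*=\frac{\frac1\kappa\sqrt{u^*}+1}{\sqrt{u^*}-1}\,e^{\frac1\alpha(\sqrt{u^*}-T)}.$$ Then uniformly for $x\in[0,x^*]$, $$0\le I(x)-S(x)\le I(x)\le\left(\frac{\frac1\kappa\sqrt{u^*}+1}{\sqrt{u^*}-1}\right)^{\alpha}e^{\sqrt{u^*}-T}.$$ Additionally, $u^*$ is monotonically increasing in $\alpha\in(0,1)$ with $u^*\in(1,4)$, and $\left(\frac{\frac1\kappa\sqrt{u^*}+1}{\sqrt{u^*}-1}\right)^{\alpha}e^{\sqrt{u^*}}$ is uniformly bounded for $\alpha\in(0,1)$.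
   Context: $\mathrm{ceil}(y)$ denotes the least integer $\ge y$. *)

theory Defs
  imports "HOL-Analysis.Analysis"
begin

definition kappa :: "real \<Rightarrow> real" where
  "kappa \<alpha> = \<alpha> / (1 - \<alpha>)"

definition ustar :: "real \<Rightarrow> real" where
  "ustar \<alpha> = (1 + (1 - 2*\<alpha>) * sqrt (4*\<alpha> - 4*\<alpha>^2 + 1)) / (2 * (1 - \<alpha>)^2)"

definition ratio_star :: "real \<Rightarrow> real" where
  "ratio_star \<alpha> = (sqrt (ustar \<alpha>) / kappa \<alpha> + 1) / (sqrt (ustar \<alpha>) - 1)"

definition xstar :: "real \<Rightarrow> real \<Rightarrow> real" where
  "xstar \<alpha> T = ratio_star \<alpha> * exp ((sqrt (ustar \<alpha>) - T) / \<alpha>)"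

definition fint :: "real \<Rightarrow> real \<Rightarrow> real \<Rightarrow> real \<Rightarrow> real" where
  "fint \<alpha> T u x = sin (\<alpha> * pi) / (\<alpha> * pi) * (1 / (2 * sqrt u)) *
      (x * exp (sqrt u - T) / (exp ((sqrt u - T) / \<alpha>) + x))"

end

(*
  Substitute u = s^2. Then f(u, x) is a positive multiple of 1 / D(s) with
  D(s) = s (exp((s - T)/alpha) + x) exp(-s). The derivative of D is nonnegative on (0, 1], and
  for s > 1 it is nonnegative iff x <= exp((s - T)/alpha) ((1 - alpha) s + alpha) / (alpha (s - 1)).
  The minimum of this bound over s > 1 is attained at s = sqrt u_*, the positive root of
  (1 - alpha) s^2 + (2 alpha - 1) s - 2 alpha, and equals x_*. So for x <= x_* the integrand is
  decreasing in u, and the right-endpoint Riemann sum S(x) lies below I(x).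
  The substitution t = E/(E + x), E = exp((s - T)/alpha), turns the integral of f over
  (0, infinity) into (sin(alpha pi)/pi) x^alpha B(alpha, 1 - alpha) = x^alpha, whence
  I(x) <= x^alpha <= x_*^alpha.
  Since alpha = s (s - 1) / ((s - 1)^2 + 1) for s = sqrt u_*, and the right-hand side increases
  on [1, 2], u_* is monotone in alpha.
*)
theory Submission
  imports Defs
begin

section \<open>The critical point u_*\<close>

lemma sqrt_ustar_eq:
  fixes a :: real
  assumes "0 < a" "a < 1"
  shows "sqrt (ustar a) = (1 - 2*a + sqrt (4*a - 4*a^2 + 1)) / (2*(1-a))"
    and "1 < sqrt (ustar a)" "sqrt (ustar a) < 2"
proof -
  define R where "R = sqrt (4*a - 4*a^2 + 1)"
  define t where "t = (1 - 2*a + R) / (2*(1-a))"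
  have disc: "4*a - 4*a^2 + 1 = 1 + 4*a*(1-a)"
    by (simp add: power2_eq_square algebra_simps)
  have R2: "R^2 = 4*a - 4*a^2 + 1"
    unfolding R_def disc using assms by simp
  have "1 < R"
    unfolding R_def disc using assms by (simp add: real_less_rsqrt)
  moreover have "R < 3 - 2*a"
  proof (rule power2_less_imp_less)
    have "0 < (1 - a)^2" using assms by simp
    then show "R^2 < (3 - 2*a)^2" using R2 by (simp add: power2_eq_square algebra_simps)
  qed (use assms in simp)
  ultimately have t: "1 < t" "t < 2"
    unfolding t_def using assms by (simp_all add: field_simps)
  have "(1 - 2*a + R)^2 = 2 * (1 + (1 - 2*a) * R)"
    using R2 by (simp add: power2_eq_square algebra_simps)
  moreover have "(2*(1-a))^2 = 2 * (2 * (1-a)^2)"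
    by (simp add: power2_eq_square algebra_simps)
  ultimately have "t^2 = (2 * (1 + (1 - 2*a) * R)) / (2 * (2 * (1-a)^2))"
    unfolding t_def power_divide by simp
  then have "ustar a = t^2"
    by (simp only: ustar_def R_def[symmetric] mult_divide_mult_cancel_left_if) simp
  then have "sqrt (ustar a) = t"
    using t by simp
  then show "sqrt (ustar a) = (1 - 2*a + sqrt (4*a - 4*a^2 + 1)) / (2*(1-a))"
    and "1 < sqrt (ustar a)" "sqrt (ustar a) < 2"
    using t unfolding t_def R_def by simp_all
qed

lemma sqrt_ustar_root:
  fixes a :: real
  assumes "0 < a" "a < 1"
  shows "(1-a) * sqrt (ustar a)^2 + (2*a - 1) * sqrt (ustar a) = 2*a"
proof -
  define s where "s = sqrt (ustar a)"
  have "0 < 4*a*(1-a)"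
    using assms by simp
  then have "0 \<le> 4*a - 4*a^2 + 1"
    by (simp add: power2_eq_square algebra_simps)
  moreover have "sqrt (4*a - 4*a^2 + 1) = 2*(1-a) * s - (1 - 2*a)"
    using sqrt_ustar_eq(1)[OF assms] assms unfolding s_def by (simp add: field_simps)
  ultimately have "(2*(1-a) * s - (1 - 2*a))^2 = 4*a - 4*a^2 + 1"
    by (metis real_sqrt_pow2)
  then have "4*(1-a) * ((1-a) * s^2 + (2*a - 1) * s - 2*a) = 0"
    by (simp add: power2_eq_square algebra_simps)
  then show ?thesis
    using assms unfolding s_def by simp
qed

lemma ustar_bounds:
  fixes a :: real
  assumes "0 < a" "a < 1"
  shows "1 < ustar a" "ustar a < 4"
  using sqrt_ustar_eq(2,3)[OF assms] real_sqrt_less_iff[of "ustar a" 4] by simp_all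

lemma alpha_eq_sqrt_ustar:
  fixes a :: real
  assumes "0 < a" "a < 1"
  defines "s \<equiv> sqrt (ustar a)"
  shows "a = s * (s - 1) / ((s - 1)^2 + 1)"
proof -
  have "a * ((s - 1)^2 + 1) = s * (s - 1)"
    using sqrt_ustar_root[OF assms(1,2)] unfolding s_def[symmetric]
    by (simp add: power2_eq_square algebra_simps)
  moreover have "0 < (s - 1)^2 + 1"
    by (simp add: add_nonneg_pos)
  ultimately show ?thesis
    by (simp add: field_simps)
qed

lemma strict_mono_on_alpha_of_sqrt_ustar:
  "strict_mono_on {1..2} (\<lambda>s::real. s * (s - 1) / ((s - 1)^2 + 1))"
proof (rule strict_mono_onI)
  fix s t :: real
  assume "s \<in> {1..2}" "t \<in> {1..2}" "s < t"
  then have "0 \<le> s - 1" "s - 1 \<le> 1" "s < t"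
    by auto
  then have "(s - 1) * (t - 1) \<le> t - 1"
    by (intro mult_left_le_one_le) auto
  then have "0 < (s - 1) + (t - 1) + 1 - (s - 1) * (t - 1)"
    using \<open>0 \<le> s - 1\<close> by linarith
  then have "0 < (t - s) * ((s - 1) + (t - 1) + 1 - (s - 1) * (t - 1))"
    using \<open>s < t\<close> by simp
  also have "\<dots> = t * (t - 1) * ((s - 1)^2 + 1) - s * (s - 1) * ((t - 1)^2 + 1)"
    by (simp add: power2_eq_square algebra_simps)
  finally have "s * (s - 1) * ((t - 1)^2 + 1) < t * (t - 1) * ((s - 1)^2 + 1)"
    by simp
  moreover have "0 < (s - 1)^2 + 1" "0 < (t - 1)^2 + 1"
    by (simp_all add: add_nonneg_pos)
  ultimately show "s * (s - 1) / ((s - 1)^2 + 1) < t * (t - 1) / ((t - 1)^2 + 1)"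
    by (simp add: divide_simps)
qed

lemma ustar_mono:
  fixes a b :: real
  assumes "0 < a" "a \<le> b" "b < 1"
  shows "ustar a \<le> ustar b"
proof -
  let ?\<alpha> = "\<lambda>s::real. s * (s - 1) / ((s - 1)^2 + 1)"
  have "sqrt (ustar a) \<le> sqrt (ustar b)"
  proof (rule ccontr)
    assume "\<not> sqrt (ustar a) \<le> sqrt (ustar b)"
    then have "?\<alpha> (sqrt (ustar b)) < ?\<alpha> (sqrt (ustar a))"
      using sqrt_ustar_eq(2,3)[of a] sqrt_ustar_eq(2,3)[of b] assms
      by (intro strict_mono_onD[OF strict_mono_on_alpha_of_sqrt_ustar]) auto
    then show False
      using alpha_eq_sqrt_ustar[of a] alpha_eq_sqrt_ustar[of b] assms by simp
  qed
  then show ?thesis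
    by simp
qed

lemma ratio_star_eq:
  fixes a :: real
  assumes "0 < a" "a < 1"
  defines "s \<equiv> sqrt (ustar a)"
  shows "ratio_star a = (((1-a) * s + a) / a)^2"
proof -
  have s: "1 < s"
    unfolding s_def using sqrt_ustar_eq(2)[OF assms(1,2)] .
  have "(s - 1) * ((1-a) * s + a) = a"
    using sqrt_ustar_root[OF assms(1,2)] unfolding s_def[symmetric]
    by (simp add: power2_eq_square algebra_simps)
  moreover have "0 < (1-a) * s + a"
    using assms(1,2) s by (simp add: add_pos_pos)
  ultimately have "s - 1 = a / ((1-a) * s + a)"
    by (simp add: eq_divide_eq)
  moreover have "ratio_star a = (((1-a) * s + a) / a) / (s - 1)"
    unfolding ratio_star_def kappa_def s_def[symmetric] using assms(1,2) by (simp add: field_simps)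
  ultimately show ?thesis
    by (simp add: power2_eq_square)
qed

lemma ratio_star_powr_exp_sqrt_ustar_le:
  fixes a :: real
  assumes "0 < a" "a < 1"
  shows "ratio_star a powr a * exp (sqrt (ustar a)) \<le> 4 * exp 4"
proof -
  define s where "s = sqrt (ustar a)"
  define q where "q = ((1-a) * s + a) / a"
  have s: "1 < s" "s < 2"
    unfolding s_def using sqrt_ustar_eq(2,3)[OF assms] by auto
  have "(1-a) * s \<le> (1-a) * 2"
    using assms s by (intro mult_left_mono) auto
  then have q: "0 < q" "q \<le> 2 / a"
    unfolding q_def using assms s by (simp_all add: divide_right_mono add_pos_nonneg)
  have "ln q \<le> ln (2 / a)"
    using q assms by simp
  also have "\<dots> = ln 2 + ln (1/a)"
    using assms by (simp add: ln_div)
  also have "\<dots> \<le> ln 2 + (1/a - 1)"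
    using assms ln_le_minus_one[of "1/a"] by simp
  finally have "2*a * ln q \<le> 2*a * (ln 2 + (1/a - 1))"
    using assms by (intro mult_left_mono) auto
  also have "\<dots> \<le> 2 * ln 2 + 2"
  proof -
    have "a * ln 2 \<le> ln 2"
      using assms by (intro mult_left_le_one_le) auto
    moreover have "2*a * (ln 2 + (1/a - 1)) = 2 * (a * ln 2) + 2 - 2*a"
      using assms by (simp add: field_simps)
    ultimately show ?thesis
      using assms by linarith
  qed
  finally have "ratio_star a powr a \<le> exp (2 * ln 2 + 2)"
    using q unfolding ratio_star_eq[OF assms] s_def[symmetric] q_def[symmetric]
    by (simp add: powr_def ln_realpow)
  also have "\<dots> = exp (ln 2) * exp (ln 2) * exp 2"
    unfolding exp_add[symmetric] by simp
  also have "\<dots> = 4 * exp 2"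
    by simp
  finally have "ratio_star a powr a * exp s \<le> 4 * exp 2 * exp 2"
    using s by (intro mult_mono) auto
  then show ?thesis
    unfolding s_def by (simp add: mult.assoc exp_add[symmetric])
qed

section \<open>Monotonicity of the integrand below x_*\<close>

(* x_* is the minimum over s > 1 of exp((s - T)/a) ((1-a) s + a) / (a (s - 1)): the quadratic
   of sqrt_ustar_root is the critical-point equation, and exp y >= 1 + y shows it is a minimum. *)
lemma sqrt_ustar_minimizes:
  fixes a s :: real
  assumes "0 < a" "a < 1" "1 < s"
  shows "((1-a) * sqrt (ustar a) + a) / (sqrt (ustar a) - 1)
           \<le> exp ((s - sqrt (ustar a)) / a) * ((1-a) * s + a) / (s - 1)"
proof -
  define S where "S = sqrt (ustar a)"
  have S: "1 < S" "(1-a) * S^2 + (2*a - 1) * S = 2*a"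
    unfolding S_def using sqrt_ustar_eq(2)[OF assms(1,2)] sqrt_ustar_root[OF assms(1,2)] by auto
  have "(a + s - S) * ((1-a) * s + a) * (S - 1) - a * ((1-a) * S + a) * (s - 1)
          = (1-a) * (S - 1) * (s - S)^2 + (s - S) * ((1-a) * S^2 + (2*a - 1) * S - 2*a)"
    by (simp add: power2_eq_square algebra_simps)
  also have "\<dots> \<ge> 0"
    using assms S by simp
  finally have "a * ((1-a) * S + a) * (s - 1) \<le> (a + s - S) * ((1-a) * s + a) * (S - 1)"
    by simp
  then have "((1-a) * S + a) / (S - 1) \<le> (1 + (s - S) / a) * (((1-a) * s + a) / (s - 1))"
    using assms S by (simp add: field_simps)
  also have "\<dots> \<le> exp ((s - S) / a) * (((1-a) * s + a) / (s - 1))"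
    using assms by (intro mult_right_mono) auto
  finally show ?thesis
    unfolding S_def by simp
qed

lemma xstar_le:
  fixes a s T :: real
  assumes "0 < a" "a < 1" "1 < s"
  shows "xstar a T \<le> exp ((s - T) / a) * ((1-a) * s + a) / (a * (s - 1))"
proof -
  define S where "S = sqrt (ustar a)"
  have "1 < S"
    unfolding S_def using sqrt_ustar_eq(2)[OF assms(1,2)] .
  then have "xstar a T = exp ((S - T) / a) / a * (((1-a) * S + a) / (S - 1))"
    unfolding xstar_def ratio_star_def kappa_def S_def[symmetric] using assms
    by (simp add: field_simps)
  also have "\<dots> \<le> exp ((S - T) / a) / a * (exp ((s - S) / a) * ((1-a) * s + a) / (s - 1))"
    using sqrt_ustar_minimizes[OF assms] assms unfolding S_def by (intro mult_left_mono) auto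
  also have "\<dots> = exp ((S - T) / a + (s - S) / a) * ((1-a) * s + a) / (a * (s - 1))"
    by (simp add: exp_add)
  also have "(S - T) / a + (s - S) / a = (s - T) / a"
    by (simp add: add_divide_distrib[symmetric])
  finally show ?thesis .
qed

lemma xstar_powr:
  fixes a T :: real
  assumes "0 < a" "a < 1"
  shows "xstar a T powr a = ratio_star a powr a * exp (sqrt (ustar a) - T)"
proof -
  have "0 < (1-a) * sqrt (ustar a) + a"
    using assms sqrt_ustar_eq(2)[OF assms] by (intro add_pos_pos mult_pos_pos) auto
  then have "0 < ratio_star a"
    unfolding ratio_star_eq[OF assms] using assms by simp
  then show ?thesis
    unfolding xstar_def using assms by (simp add: powr_mult exp_powr_real)
qed

lemma fint_nonneg:
  fixes a T u x :: real
  assumes "0 < a" "a < 1" "0 \<le> x" "0 \<le> u"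
  shows "0 \<le> fint a T u x"
proof -
  have "0 < sin (a*pi)"
    using assms by (intro sin_gt_zero) auto
  moreover have "0 < exp ((sqrt u - T) / a) + x"
    using assms by (simp add: add_pos_nonneg)
  ultimately show ?thesis
    unfolding fint_def using assms by (intro mult_nonneg_nonneg divide_nonneg_nonneg) auto
qed

lemma fint_denominator_mono:
  fixes a T x s r :: real
  assumes "0 < a" "a < 1" "0 < s" "s \<le> r" "0 \<le> x" "x \<le> xstar a T"
  shows "s * (exp ((s - T) / a) + x) * exp (-s) \<le> r * (exp ((r - T) / a) + x) * exp (-r)"
proof (rule DERIV_nonneg_imp_nondecreasing[OF \<open>s \<le> r\<close>])
  fix w
  assume w: "s \<le> w" "w \<le> r"
  define E where "E = exp ((w - T) / a)"
  have "((\<lambda>w. w * (exp ((w - T) / a) + x) * exp (-w)) has_real_derivative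
          exp (-w) * ((E + x) * (1 - w) + w * E / a)) (at w)"
    unfolding E_def using assms by (auto intro!: derivative_eq_intros simp: field_simps)
  moreover have "0 \<le> (E + x) * (1 - w) + w * E / a"
  proof (cases "w \<le> 1")
    case True
    then show ?thesis
      using assms w unfolding E_def by (intro add_nonneg_nonneg mult_nonneg_nonneg) auto
  next
    case False
    then have "x \<le> E * ((1-a) * w + a) / (a * (w - 1))"
      using xstar_le[OF assms(1,2), of w T] assms(6) unfolding E_def by simp
    then have "x * (a * (w - 1)) \<le> E * ((1-a) * w + a)"
      using assms False by (simp add: pos_le_divide_eq)
    moreover have "(E + x) * (1 - w) + w * E / a = (E * ((1-a) * w + a) - x * (a * (w - 1))) / a"
      using assms by (simp add: field_simps)
    ultimately show ?thesis
      using assms by simp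
  qed
  ultimately show "\<exists>y. ((\<lambda>w. w * (exp ((w - T) / a) + x) * exp (-w)) has_real_derivative y) (at w)
                     \<and> 0 \<le> y"
    by auto
qed

lemma fint_antimono:
  fixes a T x u v :: real
  assumes "0 < a" "a < 1" "0 < u" "u \<le> v" "0 \<le> x" "x \<le> xstar a T"
  shows "fint a T v x \<le> fint a T u x"
proof -
  define D where "D s = s * (exp ((s - T) / a) + x) * exp (-s)" for s
  have fint_eq: "fint a T w x = sin (a*pi) / (a*pi) * (x * exp (-T)) / (2 * D (sqrt w))"
    if "0 < w" for w
  proof -
    have "0 < exp ((sqrt w - T) / a) + x"
      using assms by (simp add: add_pos_nonneg)
    then show ?thesis
      using that unfolding fint_def D_def by (simp add: exp_diff exp_minus field_simps)
  qed
  have "0 < sin (a*pi)"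
    using assms by (intro sin_gt_zero) auto
  moreover have "0 < D (sqrt u)"
    unfolding D_def using assms by (simp add: add_pos_nonneg)
  moreover have "D (sqrt u) \<le> D (sqrt v)"
    unfolding D_def using assms by (intro fint_denominator_mono) auto
  moreover have "0 < v"
    using assms by simp
  ultimately show ?thesis
    unfolding fint_eq[OF \<open>0 < u\<close>] fint_eq[OF \<open>0 < v\<close>] using assms
    by (intro divide_left_mono mult_pos_pos) auto
qed

section \<open>The integral via the Beta function\<close>

lemma Beta_reflection_real:
  fixes a :: real
  assumes "0 < a" "a < 1"
  shows "Beta a (1 - a) = pi / sin (pi * a)"
proof -
  have "complex_of_real (Gamma a) * complex_of_real (Gamma (1 - a))
          = complex_of_real pi / complex_of_real (sin (pi * a))"
    using Gamma_reflection_complex[of "complex_of_real a"]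
    by (simp flip: Gamma_complex_of_real sin_of_real)
  then have "Gamma a * Gamma (1 - a) = pi / sin (pi * a)"
    by (simp only: of_real_mult[symmetric] of_real_divide[symmetric] of_real_eq_iff)
  then show ?thesis
    unfolding Beta_def by simp
qed

definition incomplete_Beta :: "real \<Rightarrow> real \<Rightarrow> real \<Rightarrow> real" where
  "incomplete_Beta a b t = integral {0..t} (\<lambda>s. s powr (a - 1) * (1 - s) powr (b - 1))"

lemma incomplete_Beta_has_real_derivative:
  fixes a b t :: real
  assumes "0 < a" "0 < b" "0 < t" "t < 1"
  shows "(incomplete_Beta a b has_real_derivative t powr (a - 1) * (1 - t) powr (b - 1)) (at t)"
proof -
  let ?p = "\<lambda>s::real. s powr (a - 1) * (1 - s) powr (b - 1)"
  have "continuous (at t) ?p"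
    using assms by (intro continuous_intros) auto
  then have "continuous (at t within ({0..1} - {})) ?p"
    by (rule continuous_at_imp_continuous_within)
  then have "(incomplete_Beta a b has_vector_derivative ?p t) (at t within ({0..1} - {}))"
    unfolding incomplete_Beta_def using assms
    by (intro integral_has_vector_derivative_continuous_at[OF integrable_Beta']) auto
  then show ?thesis
    using assms by (simp add: at_within_Icc_at has_real_derivative_iff_has_vector_derivative)
qed

lemma incomplete_Beta_bounds:
  fixes a b t :: real
  assumes "0 < a" "0 < b" "0 \<le> t" "t \<le> 1"
  shows "0 \<le> incomplete_Beta a b t" "incomplete_Beta a b t \<le> Beta a b"
proof -
  let ?p = "\<lambda>s::real. s powr (a - 1) * (1 - s) powr (b - 1)"
  have p: "?p integrable_on {0..1}"
    using assms by (intro integrable_Beta') auto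
  show "0 \<le> incomplete_Beta a b t"
    unfolding incomplete_Beta_def
    using assms by (intro integral_nonneg integrable_subinterval_real[OF p]) auto
  moreover have "0 \<le> integral {t..1} ?p"
    using assms by (intro integral_nonneg integrable_subinterval_real[OF p]) auto
  moreover have "incomplete_Beta a b t + integral {t..1} ?p = integral {0..1} ?p"
    unfolding incomplete_Beta_def by (rule Henstock_Kurzweil_Integration.integral_combine[OF assms(3,4) p])
  moreover have "integral {0..1} ?p = Beta a b"
    using has_integral_Beta_real[OF assms(1,2)] by (rule integral_unique)
  ultimately show "incomplete_Beta a b t \<le> Beta a b"
    by linarith
qed

lemma Beta_density_logistic:
  fixes a x y :: real
  assumes "0 < x"
  defines "\<tau> \<equiv> exp y / (exp y + x)"
  shows "x powr a * (\<tau> powr (a - 1) * (1 - \<tau>) powr (-a)) = exp ((a - 1) * y) * (exp y + x)"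
proof -
  have pos: "0 < exp y + x"
    using assms by (simp add: add_pos_pos)
  have "1 - \<tau> = x / (exp y + x)"
    unfolding \<tau>_def using pos by (simp add: field_simps)
  then have "0 < \<tau>" "0 < 1 - \<tau>" "ln \<tau> = y - ln (exp y + x)" "ln (1 - \<tau>) = ln x - ln (exp y + x)"
    unfolding \<tau>_def using assms pos by (simp_all add: ln_div)
  then have "x powr a * (\<tau> powr (a - 1) * (1 - \<tau>) powr (-a))
               = exp (a * ln x) * (exp ((a - 1) * (y - ln (exp y + x))) * exp (-a * (ln x - ln (exp y + x))))"
    using assms(1) pos by (simp add: powr_def)
  also have "\<dots> = exp ((a - 1) * y + ln (exp y + x))"
    unfolding exp_add[symmetric] by (simp add: algebra_simps)
  also have "\<dots> = exp ((a - 1) * y) * (exp y + x)"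
    using pos by (simp add: exp_add)
  finally show ?thesis .
qed

(* An antiderivative of f in the variable s = sqrt u. *)
definition fint_primitive :: "real \<Rightarrow> real \<Rightarrow> real \<Rightarrow> real \<Rightarrow> real" where
  "fint_primitive a T s x =
     sin (a*pi) / pi * x powr a * incomplete_Beta a (1 - a) (exp ((s - T) / a) / (exp ((s - T) / a) + x))"

lemma fint_primitive_has_real_derivative:
  fixes a T x s :: real
  assumes "0 < a" "a < 1" "0 < x"
  shows "((\<lambda>s. fint_primitive a T s x) has_real_derivative
           sin (a*pi) / (a*pi) * (x * exp (s - T) / (exp ((s - T) / a) + x))) (at s)"
proof -
  define E where "E = exp ((s - T) / a)"
  define P where "P = exp ((a - 1) * ((s - T) / a))"
  define \<tau> where "\<tau> s = exp ((s - T) / a) / (exp ((s - T) / a) + x)" for s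
  have pos: "0 < E + x"
    unfolding E_def using assms by (simp add: add_pos_pos)
  have "0 < \<tau> s" "\<tau> s < 1"
    unfolding \<tau>_def using assms by (simp_all add: add_pos_pos)
  then have "(incomplete_Beta a (1 - a) has_real_derivative
               \<tau> s powr (a - 1) * (1 - \<tau> s) powr (-a)) (at (\<tau> s))"
    using incomplete_Beta_has_real_derivative[of a "1 - a" "\<tau> s"] assms by simp
  moreover have "(\<tau> has_real_derivative E * x / (a * (E + x)^2)) (at s)"
    using assms pos unfolding \<tau>_def E_def
    by (auto intro!: derivative_eq_intros simp: field_simps power2_eq_square)
  ultimately have "((\<lambda>s. incomplete_Beta a (1 - a) (\<tau> s)) has_real_derivative
      \<tau> s powr (a - 1) * (1 - \<tau> s) powr (-a) * (E * x / (a * (E + x)^2))) (at s)"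
    by (rule DERIV_chain2)
  then have "((\<lambda>s. fint_primitive a T s x) has_real_derivative sin (a*pi) / pi *
      (x powr a * (\<tau> s powr (a - 1) * (1 - \<tau> s) powr (-a)) * (E * x / (a * (E + x)^2)))) (at s)"
    unfolding fint_primitive_def \<tau>_def[symmetric]
    by (auto intro!: derivative_eq_intros simp: mult_ac)
  also have "x powr a * (\<tau> s powr (a - 1) * (1 - \<tau> s) powr (-a)) = P * (E + x)"
    unfolding \<tau>_def E_def P_def by (rule Beta_density_logistic[OF assms(3)])
  also have "sin (a*pi) / pi * (P * (E + x) * (E * x / (a * (E + x)^2)))
               = sin (a*pi) / (a*pi) * (x * (P * E) / (E + x))"
  proof -
    have "sin (a*pi) / pi * (P * D * (E * x / (a * D^2))) = sin (a*pi) / (a*pi) * (x * (P * E) / D)"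
      if "D \<noteq> 0" for D
      using that assms by (simp add: power2_eq_square field_simps)
    then show ?thesis
      using pos by simp
  qed
  also have "P * E = exp (s - T)"
    unfolding P_def E_def exp_add[symmetric] using assms by (simp add: field_simps)
  finally show ?thesis
    unfolding E_def .
qed

lemma fint_primitive_bounds:
  fixes a T s x :: real
  assumes "0 < a" "a < 1" "0 < x"
  shows "0 \<le> fint_primitive a T s x" "fint_primitive a T s x \<le> x powr a"
proof -
  define \<tau> where "\<tau> = exp ((s - T) / a) / (exp ((s - T) / a) + x)"
  have "0 \<le> \<tau>" "\<tau> \<le> 1"
    unfolding \<tau>_def using assms by (simp_all add: add_pos_pos)
  then have H: "0 \<le> incomplete_Beta a (1 - a) \<tau>" "incomplete_Beta a (1 - a) \<tau> \<le> pi / sin (pi * a)"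
    using incomplete_Beta_bounds[of a "1 - a" \<tau>] Beta_reflection_real[of a] assms by auto
  have sin: "0 < sin (a*pi)"
    using assms by (intro sin_gt_zero) auto
  then show "0 \<le> fint_primitive a T s x"
    unfolding fint_primitive_def \<tau>_def[symmetric] using H by simp
  have "fint_primitive a T s x \<le> sin (a*pi) / pi * x powr a * (pi / sin (pi * a))"
    unfolding fint_primitive_def \<tau>_def[symmetric] using H sin by (intro mult_left_mono) auto
  also have "\<dots> = x powr a"
    using sin by (simp add: mult.commute)
  finally show "fint_primitive a T s x \<le> x powr a" .
qed

lemma fint_has_integral:
  fixes a T x b :: real
  assumes "0 < a" "a < 1" "0 < x" "0 \<le> b"
  shows "((\<lambda>u. fint a T u x) has_integral
           fint_primitive a T (sqrt b) x - fint_primitive a T (sqrt 0) x) {0..b}"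
proof (rule fundamental_theorem_of_calculus_interior[where f = "\<lambda>u. fint_primitive a T (sqrt u) x"])
  have cont: "isCont (\<lambda>s. fint_primitive a T s x) s" for s
    using fint_primitive_has_real_derivative[OF assms(1-3)] by (rule DERIV_isCont)
  show "continuous_on {0..b} (\<lambda>u. fint_primitive a T (sqrt u) x)"
  proof (intro continuous_at_imp_continuous_on ballI)
    fix u
    show "isCont (\<lambda>u. fint_primitive a T (sqrt u) x) u"
      using continuous_at_compose[OF isCont_real_sqrt cont] by (simp add: o_def)
  qed
next
  fix u
  assume "u \<in> {0<..<b}"
  then have "0 < u"
    by simp
  have "((\<lambda>u. fint_primitive a T (sqrt u) x) has_real_derivative
          sin (a*pi) / (a*pi) * (x * exp (sqrt u - T) / (exp ((sqrt u - T) / a) + x))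
          * (inverse (sqrt u) / 2)) (at u)"
    by (rule DERIV_chain2[OF fint_primitive_has_real_derivative[OF assms(1-3)] DERIV_real_sqrt[OF \<open>0 < u\<close>]])
  also have "sin (a*pi) / (a*pi) * (x * exp (sqrt u - T) / (exp ((sqrt u - T) / a) + x))
               * (inverse (sqrt u) / 2) = fint a T u x"
    unfolding fint_def by (simp add: field_simps)
  finally show "((\<lambda>u. fint_primitive a T (sqrt u) x) has_vector_derivative fint a T u x) (at u)"
    by (simp add: has_real_derivative_iff_has_vector_derivative)
qed (use assms in simp)

lemma fint_integrable_integral_le:
  fixes a T x b :: real
  assumes "0 < a" "a < 1" "0 \<le> x" "0 \<le> b"
  shows "(\<lambda>u. fint a T u x) integrable_on {0..b}"
    and "integral {0..b} (\<lambda>u. fint a T u x) \<le> x powr a"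
proof -
  have "(\<lambda>u. fint a T u x) integrable_on {0..b} \<and> integral {0..b} (\<lambda>u. fint a T u x) \<le> x powr a"
  proof (cases "x = 0")
    case True
    then show ?thesis
      by (simp add: fint_def integrable_0)
  next
    case False
    with assms have "0 < x"
      by simp
    have "((\<lambda>u. fint a T u x) has_integral
            fint_primitive a T (sqrt b) x - fint_primitive a T (sqrt 0) x) {0..b}"
      using fint_has_integral[OF assms(1,2) \<open>0 < x\<close> assms(4)] .
    moreover have "fint_primitive a T (sqrt b) x \<le> x powr a" "0 \<le> fint_primitive a T (sqrt 0) x"
      using fint_primitive_bounds[OF assms(1,2) \<open>0 < x\<close>] by auto
    ultimately show ?thesis
      by (auto simp: integral_unique has_integral_integrable)
  qed
  then show "(\<lambda>u. fint a T u x) integrable_on {0..b}"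
    and "integral {0..b} (\<lambda>u. fint a T u x) \<le> x powr a"
    by auto
qed

lemma sum_le_integral_antimono:
  fixes f :: "real \<Rightarrow> real" and h :: real and N :: nat
  assumes "0 < h" "f integrable_on {0..real N * h}"
    and "\<And>u v. 0 < u \<Longrightarrow> u \<le> v \<Longrightarrow> f v \<le> f u"
  shows "h * (\<Sum>j=1..N. f (real j * h)) \<le> integral {0..real N * h} f"
  using assms(2)
proof (induction N)
  case 0
  then show ?case
    by simp
next
  case (Suc n)
  define A where "A = real n * h"
  define B where "B = real (Suc n) * h"
  have AB: "0 \<le> A" "A \<le> B" "B - A = h"
    unfolding A_def B_def using assms(1) by (auto simp: algebra_simps)
  have f: "f integrable_on {0..B}"
    using Suc.prems unfolding B_def .
  have "h * (\<Sum>j=1..n. f (real j * h)) \<le> integral {0..A} f"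
    using Suc.IH integrable_subinterval_real[OF f] AB unfolding A_def by auto
  moreover have "h * f B \<le> integral {A..B} f"
  proof -
    have "integral {A<..<B} (\<lambda>_. f B) \<le> integral {A<..<B} f"
      using AB integrable_subinterval_real[OF f, of A B]
      by (intro integral_le assms(3)) (auto simp: integrable_on_open_interval_real)
    then show ?thesis
      using AB by (simp flip: integral_open_interval_real)
  qed
  moreover have "integral {0..A} f + integral {A..B} f = integral {0..B} f"
    using AB by (intro Henstock_Kurzweil_Integration.integral_combine f)
  ultimately show ?case
    unfolding B_def A_def by (simp add: algebra_simps)
qed

theorem theorem3p3:
  fixes \<alpha> \<sigma> :: real and N\<^sub>1 :: nat
  assumes "0 < \<alpha>" "\<alpha> < 1" "0 < \<sigma>" "0 < N\<^sub>1"
  defines "h \<equiv> \<sigma>^2 * \<alpha>^2"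
  defines "T \<equiv> \<sigma> * \<alpha> * sqrt (real N\<^sub>1)"
  defines "N\<^sub>t \<equiv> nat \<lceil>(kappa \<alpha> + 1)^2 * T^2 / h + 1\<rceil>"
  defines "I \<equiv> (\<lambda>x. integral {0..real N\<^sub>t * h} (\<lambda>u. fint \<alpha> T u x))"
  defines "S \<equiv> (\<lambda>x. h * (\<Sum>j=1..N\<^sub>t. fint \<alpha> T (real j * h) x))"
  shows "(\<forall>x \<in> {0..1} \<inter> {0..xstar \<alpha> T}.
            0 \<le> I x - S x \<and> I x - S x \<le> I x \<and>
            I x \<le> ratio_star \<alpha> powr \<alpha> * exp (sqrt (ustar \<alpha>) - T))
      \<and> mono_on {0<..<1} ustar
      \<and> (\<forall>a \<in> {0<..<1}. 1 < ustar a \<and> ustar a < 4)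
      \<and> (\<exists>C. \<forall>a \<in> {0<..<1}. \<bar>ratio_star a powr a * exp (sqrt (ustar a))\<bar> \<le> C)"
proof -
  have \<alpha>: "0 < \<alpha>" "\<alpha> < 1" and "0 < h"
    using assms unfolding h_def by auto
  have "0 \<le> I x - S x \<and> I x - S x \<le> I x \<and>
          I x \<le> ratio_star \<alpha> powr \<alpha> * exp (sqrt (ustar \<alpha>) - T)"
    if "x \<in> {0..1} \<inter> {0..xstar \<alpha> T}" for x
  proof -
    have x: "0 \<le> x" "x \<le> xstar \<alpha> T"
      using that by auto
    have "0 \<le> S x"
      unfolding S_def using \<open>0 < h\<close> by (intro mult_nonneg_nonneg sum_nonneg fint_nonneg \<alpha> x) auto
    moreover have "S x \<le> I x"
      unfolding S_def I_def using \<open>0 < h\<close> fint_integrable_integral_le(1)[OF \<alpha> x(1)]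
      by (intro sum_le_integral_antimono fint_antimono[OF \<alpha> _ _ x]) auto
    moreover have "I x \<le> x powr \<alpha>"
      unfolding I_def using \<open>0 < h\<close> by (intro fint_integrable_integral_le(2) \<alpha> x) simp
    moreover have "x powr \<alpha> \<le> xstar \<alpha> T powr \<alpha>"
      using \<alpha> x by (intro powr_mono2) auto
    ultimately show ?thesis
      unfolding xstar_powr[OF \<alpha>] by simp
  qed
  moreover have "mono_on {0<..<1} ustar"
    by (rule mono_onI) (use ustar_mono in auto)
  moreover have "\<forall>a \<in> {0<..<1}. 1 < ustar a \<and> ustar a < 4"
    using ustar_bounds by auto
  moreover have "\<forall>a \<in> {0<..<1}. \<bar>ratio_star a powr a * exp (sqrt (ustar a))\<bar> \<le> 4 * exp 4"
    using ratio_star_powr_exp_sqrt_ustar_le by auto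
  ultimately show ?thesis
    by blast
qed

end
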